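(* Let $U\in\mathbb{R}^{n\times d}$, let $\mathbf{x}_*\in\mathbb{R}^d$ be an $s$-sparse signal, and let $\mathbf{y}=U\mathbf{x}_*$ (noiseless measurements). Assume $U$ satisfies \[ \gamma := \delta_s + \sqrt{2}\,\theta_{s,s} + \delta_{3s} < 1 . \] Let $\Delta_1,\Delta_2,\ldots$ be a sequence with $\|\mathbf{x}_1-\mathbf{x}_*\|_2\le \Delta_1$ and $\Delta_{t+1} = (\delta_s+\sqrt{2}\theta_{s,s}+\delta_{3s})\Delta_t$. If Algorithm 1 is run with $\lambda_t = \frac{\delta_s+\sqrt{2}\theta_{s,s}}{\sqrt{s}}\Delta_t$, then for all $t\ge 0$: (i) $|\mathcal{S}_{t+1}\setminus \mathcal{S}_*|\le s$, and (ii) $\|\mathbf{x}_{t+1}-\mathbf{x}_*\|_2\le \gamma^t\Delta_1$.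
   Context: For $\mathbf{x}\in\mathbb{R}^d$, $\mathcal{S}(\mathbf{x})=\{i:[\mathbf{x}]_i\neq 0\}$ is its support; $\mathbf{x}$ is $s$-sparse if $|\mathcal{S}(\mathbf{x})|\le s$. For $\mathcal T\subseteq\{1,\dots,d\}$, $U_{\mathcal T}$ is the submatrix of $U$ with columns indexed by $\mathcal T$. The restricted isometry constant $\delta_s\ge0$ is the smallest constant such that for every $\mathcal T$ with $|\mathcal T|\le s$ and every $\mathbf{v}\in\mathbb{R}^{|\mathcal T|}$, $(1-\delta_s)\|\mathbf{v}\|_2^2\le\|U_{\mathcal T}\mathbf{v}\|_2^2\le(1+\delta_s)\|\mathbf{v}\|_2^2$. The restricted orthogonality constant $\theta_{s,s}$ (with $2s\le d$) is the smallest constant such that for all disjoint $\mathcal T,\mathcal T'$ with $|\mathcal T|,|\mathcal T'|\le s$ and all $\mathbf{v}\in\mathbb{R}^{|\mathcal T|},\mathbf{v}'\in\mathbb{R}^{|\mathcal T'|}$, $|\langle U_{\mathcal T}\mathbf{v},U_{\mathcal T'}\mathbf{v}'\rangle|\le\theta_{s,s}\|\mathbf{v}\|_2\|\mathbf{v}'\|_2$. Algorithm 1 (homotopy proximal mapping): given $U$, $\mathbf{y}$ and parameters $\lambda_1,\lambda_2,\ldots>0$, set $\mathbf{x}_1=0$ and for $t=1,2,\ldots$ compute $\widehat{\mathbf{x}}_t=\mathbf{x}_t-U^\top(U\mathbf{x}_t-\mathbf{y})$ and $\mathbf{x}_{t+1}=\mathrm{sign}(\widehat{\mathbf{x}}_t)[|\widehat{\mathbf{x}}_t|-\lambda_t]_+$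 (componentwise soft-thresholding; equivalently $\mathbf{x}_{t+1}=\arg\min_{\mathbf{x}}\frac12\|\mathbf{x}-\widehat{\mathbf{x}}_t\|_2^2+\lambda_t\|\mathbf{x}\|_1$). $\mathcal{S}_t=\mathcal{S}(\mathbf{x}_t)$ and $\mathcal{S}_*=\mathcal{S}(\mathbf{x}_* )$. *)

theory Defs
  imports "HOL-Analysis.Analysis"
begin

definition supp :: "real ^ 'd \<Rightarrow> 'd set" where
  "supp x = {i. x $ i \<noteq> 0}"

text \<open>A vector v in R^|T| embedded as a vector of R^d supported in T; then U_T v = U *v x
  and the norms agree.\<close>

definition ric :: "real ^ 'd ^ 'n \<Rightarrow> nat \<Rightarrow> real" where
  "ric U s = Inf {c. c \<ge> 0 \<and> (\<forall>x :: real ^ 'd. card (supp x) \<le> s \<longrightarrow>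
       (1 - c) * (norm x)\<^sup>2 \<le> (norm (U *v x))\<^sup>2 \<and> (norm (U *v x))\<^sup>2 \<le> (1 + c) * (norm x)\<^sup>2)}"

definition roc :: "real ^ 'd ^ 'n \<Rightarrow> nat \<Rightarrow> real" where
  "roc U s = Inf {c. c \<ge> 0 \<and> (\<forall>x x' :: real ^ 'd. card (supp x) \<le> s \<longrightarrow> card (supp x') \<le> s
       \<longrightarrow> supp x \<inter> supp x' = {} \<longrightarrow>
       \<bar>(U *v x) \<bullet> (U *v x')\<bar> \<le> c * norm x * norm x')}"

definition soft :: "real ^ 'd \<Rightarrow> real \<Rightarrow> real ^ 'd" where
  "soft z l = (\<chi> i. sgn (z $ i) * max (\<bar>z $ i\<bar> - l) 0)"

end

theory Submission
  imports Defs
begin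

(*
  Write e = x_t - x_* and z = e - U^T U e, so that the gradient step is x_* + z.

  (i) Soft thresholding keeps a coordinate i outside S_* only if |z_i| > lambda_t.
  If there were more than s of them, restricting z to s of them would give a vector v
  off S_* with |v|^2 = <v, z> = <v, e> - <U v, U e>.  Splitting e into its parts on
  supp v, on S_* and on the rest, which lies in S_t - S_*, bounds this by
  (delta_s + sqrt 2 theta_{s,s}) |v| |e| <= sqrt s lambda_t |v|, contradicting
  |v|^2 > s lambda_t^2.

  (ii) The optimality condition of the proximal map gives, for h = x_{t+1} - x_*,
  |h|^2 <= <z, h> + lambda_t (|x_*|_1 - |x_{t+1}|_1).  As e and h live on at most 3s
  coordinates, <z, h> <= delta_{3s} |e| |h|, and the l1 term is at most
  sqrt s |h| because x_* is s-sparse.  Hence |h| <= gamma Delta_t, and the theorem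
  follows by induction on t.
*)

lemma supp_eq_empty_iff: "supp x = {} \<longleftrightarrow> x = 0"
  by (auto simp: supp_def vec_eq_iff)

lemma supp_add_subset: "supp (a + b) \<subseteq> supp a \<union> supp b"
  by (auto simp: supp_def)

lemma supp_diff_subset: "supp (a - b) \<subseteq> supp a \<union> supp b"
  by (auto simp: supp_def)

lemma supp_scaleR_subset: "supp (c *\<^sub>R a) \<subseteq> supp a"
  by (auto simp: supp_def)

lemma inner_transpose_matrix: "x \<bullet> (transpose U *v w) = (U *v x) \<bullet> (w :: real ^ 'n)"
  by (metis dot_lmul_matrix inner_commute transpose_transpose vector_transpose_matrix)

lemma cInf_admissible_constant:
  fixes a b :: "'a \<Rightarrow> real" and P :: "'a \<Rightarrow> bool"
  defines "F \<equiv> {c. c \<ge> 0 \<and> (\<forall>j. P j \<longrightarrow> a j \<le> c * b j)}"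
  assumes b_nonneg: "\<And>j. P j \<Longrightarrow> b j \<ge> 0" and c0: "c0 \<in> F"
  shows "Inf F \<ge> 0" and "P j \<Longrightarrow> a j \<le> Inf F * b j"
proof -
  have F: "F \<noteq> {}" using c0 by blast
  show "Inf F \<ge> 0" by (rule cInf_greatest[OF F]) (simp add: F_def)
  assume j: "P j"
  show "a j \<le> Inf F * b j"
  proof (cases "b j = 0")
    case True
    have "a j \<le> c0 * b j" using c0 j unfolding F_def by blast
    with True show ?thesis by simp
  next
    case False
    then have b: "b j > 0" using b_nonneg[OF j] by simp
    have "a j / b j \<le> Inf F"
      by (rule cInf_greatest[OF F]) (use j b in \<open>auto simp: F_def pos_divide_le_eq\<close>)
    then show ?thesis using b by (simp add: pos_divide_le_eq)
  qed
qed

lemma ric_eq_Inf_abs: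
  "ric U k = Inf {c. c \<ge> 0 \<and> (\<forall>x. card (supp x) \<le> k \<longrightarrow>
     \<bar>(norm (U *v x))\<^sup>2 - (norm x)\<^sup>2\<bar> \<le> c * (norm x)\<^sup>2)}"
  unfolding ric_def by (rule arg_cong[where f = Inf]) (auto simp: abs_le_iff algebra_simps)

lemma matrix_vector_mult_norm_bound:
  fixes U :: "real ^ 'd ^ 'n"
  obtains K where "\<And>x. norm (U *v x) \<le> norm x * K"
  using bounded_linear.bounded[OF matrix_vector_mul_bounded_linear] by metis

lemma
  fixes U :: "real ^ 'd ^ 'n"
  shows ric_nonneg: "ric U k \<ge> 0"
    and ric_bound: "card (supp x) \<le> k \<Longrightarrow>
      \<bar>(norm (U *v x))\<^sup>2 - (norm x)\<^sup>2\<bar> \<le> ric U k * (norm x)\<^sup>2"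
proof -
  obtain K where K: "\<And>x. norm (U *v x) \<le> norm x * K"
    using matrix_vector_mult_norm_bound[of U] by blast
  have "\<bar>(norm (U *v x))\<^sup>2 - (norm x)\<^sup>2\<bar> \<le> (K\<^sup>2 + 1) * (norm x)\<^sup>2" for x
  proof -
    have "(norm (U *v x))\<^sup>2 \<le> K\<^sup>2 * (norm x)\<^sup>2"
      using power_mono[OF K[of x] norm_ge_zero, of 2] by (simp add: power_mult_distrib mult.commute)
    moreover have "0 \<le> K\<^sup>2 * (norm x)\<^sup>2" by simp
    ultimately show ?thesis
      unfolding distrib_right abs_le_iff
      using zero_le_power2[of "norm (U *v x)"] zero_le_power2[of "norm x"] by linarith
  qed
  then have adm: "K\<^sup>2 + 1 \<in> {c. c \<ge> 0 \<and> (\<forall>x. card (supp x) \<le> k \<longrightarrow>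
      \<bar>(norm (U *v x))\<^sup>2 - (norm x)\<^sup>2\<bar> \<le> c * (norm x)\<^sup>2)}"
    by simp
  show "ric U k \<ge> 0"
    unfolding ric_eq_Inf_abs by (rule cInf_admissible_constant(1)[OF _ adm]) simp
  show "\<bar>(norm (U *v x))\<^sup>2 - (norm x)\<^sup>2\<bar> \<le> ric U k * (norm x)\<^sup>2" if "card (supp x) \<le> k"
    unfolding ric_eq_Inf_abs by (rule cInf_admissible_constant(2)[OF _ adm]) (use that in simp_all)
qed

lemma roc_eq_Inf_pairs:
  "roc U k = Inf {c. c \<ge> 0 \<and> (\<forall>p. card (supp (fst p)) \<le> k \<and> card (supp (snd p)) \<le> k
     \<and> supp (fst p) \<inter> supp (snd p) = {} \<longrightarrow>
     \<bar>(U *v fst p) \<bullet> (U *v snd p)\<bar> \<le> c * (norm (fst p) * norm (snd p)))}"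
  unfolding roc_def by (rule arg_cong[where f = Inf]) (auto simp: mult.assoc)

lemma
  fixes U :: "real ^ 'd ^ 'n"
  shows roc_nonneg: "roc U k \<ge> 0"
    and roc_bound: "card (supp x) \<le> k \<Longrightarrow> card (supp x') \<le> k \<Longrightarrow> supp x \<inter> supp x' = {} \<Longrightarrow>
      \<bar>(U *v x) \<bullet> (U *v x')\<bar> \<le> roc U k * norm x * norm x'"
proof -
  obtain K where K: "\<And>x. norm (U *v x) \<le> norm x * K"
    using matrix_vector_mult_norm_bound[of U] by blast
  have "\<bar>(U *v x) \<bullet> (U *v x')\<bar> \<le> K\<^sup>2 * (norm x * norm x')" for x x'
  proof -
    have "\<bar>(U *v x) \<bullet> (U *v x')\<bar> \<le> norm (U *v x) * norm (U *v x')"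
      by (rule Cauchy_Schwarz_ineq2)
    also have "\<dots> \<le> (norm x * K) * (norm x' * K)"
      using K order_trans[OF norm_ge_zero K] by (intro mult_mono) auto
    finally show ?thesis by (simp add: power2_eq_square mult_ac)
  qed
  then have adm: "K\<^sup>2 \<in> {c. c \<ge> 0 \<and> (\<forall>p. card (supp (fst p)) \<le> k \<and> card (supp (snd p)) \<le> k
     \<and> supp (fst p) \<inter> supp (snd p) = {} \<longrightarrow>
     \<bar>(U *v fst p) \<bullet> (U *v snd p)\<bar> \<le> c * (norm (fst p) * norm (snd p)))}"
    by simp
  show "roc U k \<ge> 0"
    unfolding roc_eq_Inf_pairs by (rule cInf_admissible_constant(1)[OF _ adm]) simp
  show "\<bar>(U *v x) \<bullet> (U *v x')\<bar> \<le> roc U k * norm x * norm x'"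
    if "card (supp x) \<le> k" "card (supp x') \<le> k" "supp x \<inter> supp x' = {}"
    using cInf_admissible_constant(2)[OF _ adm, of "(x, x')"] that
    unfolding roc_eq_Inf_pairs by (simp add: mult.assoc)
qed

lemma ric_inner_bound_equal_norms:
  fixes U :: "real ^ 'd ^ 'n"
  assumes norms: "norm a = norm b" and card: "card (supp a \<union> supp b) \<le> k"
  shows "\<bar>a \<bullet> b - (U *v a) \<bullet> (U *v b)\<bar> \<le> ric U k * (norm a)\<^sup>2"
proof -
  have card_le: "card (supp w) \<le> k" if "supp w \<subseteq> supp a \<union> supp b" for w
    using card_mono[OF finite that] card by linarith
  have plus: "\<bar>(norm (U *v a + U *v b))\<^sup>2 - (norm (a + b))\<^sup>2\<bar> \<le> ric U k * (norm (a + b))\<^sup>2"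
    using ric_bound[OF card_le[OF supp_add_subset], of U] by (simp add: matrix_vector_right_distrib)
  have minus: "\<bar>(norm (U *v a - U *v b))\<^sup>2 - (norm (a - b))\<^sup>2\<bar> \<le> ric U k * (norm (a - b))\<^sup>2"
    using ric_bound[OF card_le[OF supp_diff_subset], of U] by (simp add: matrix_vector_mult_diff_distrib)
  have polar: "4 * (x \<bullet> y) = (norm (x + y))\<^sup>2 - (norm (x - y))\<^sup>2" for x y :: "'a::real_inner"
    using dot_norm[of x y] dot_norm_neg[of x y] by (simp add: field_simps)
  have parallelogram: "(norm (a + b))\<^sup>2 + (norm (a - b))\<^sup>2 = 4 * (norm a)\<^sup>2"
    using dot_norm[of a b] dot_norm_neg[of a b] norms by (simp add: field_simps)
  have "4 * (a \<bullet> b - (U *v a) \<bullet> (U *v b))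
      = ((norm (U *v a - U *v b))\<^sup>2 - (norm (a - b))\<^sup>2) - ((norm (U *v a + U *v b))\<^sup>2 - (norm (a + b))\<^sup>2)"
    using polar[of a b] polar[of "U *v a" "U *v b"] unfolding right_diff_distrib by linarith
  then have "\<bar>4 * (a \<bullet> b - (U *v a) \<bullet> (U *v b))\<bar> \<le> ric U k * (norm (a + b))\<^sup>2 + ric U k * (norm (a - b))\<^sup>2"
    using plus minus unfolding abs_le_iff by linarith
  then show ?thesis unfolding distrib_left[symmetric] parallelogram by (simp add: abs_mult)
qed

lemma ric_inner_bound:
  fixes U :: "real ^ 'd ^ 'n"
  assumes "card (supp u \<union> supp v) \<le> k"
  shows "\<bar>u \<bullet> v - (U *v u) \<bullet> (U *v v)\<bar> \<le> ric U k * norm u * norm v"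
proof (cases "u = 0 \<or> v = 0")
  case True
  then show ?thesis using ric_nonneg[of U k] by auto
next
  case False
  define m where "m = norm u * norm v"
  have m: "m > 0" using False by (simp add: m_def)
  let ?a = "norm v *\<^sub>R u" and ?b = "norm u *\<^sub>R v"
  have "supp ?a \<union> supp ?b \<subseteq> supp u \<union> supp v"
    using supp_scaleR_subset by blast
  then have "card (supp ?a \<union> supp ?b) \<le> k"
    using card_mono[OF finite] assms le_trans by blast
  then have "\<bar>?a \<bullet> ?b - (U *v ?a) \<bullet> (U *v ?b)\<bar> \<le> ric U k * m\<^sup>2"
    using ric_inner_bound_equal_norms[of ?a ?b k U] by (simp add: m_def mult.commute)
  moreover have "?a \<bullet> ?b - (U *v ?a) \<bullet> (U *v ?b) = m * (u \<bullet> v - (U *v u) \<bullet> (U *v v))"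
    by (simp add: m_def algebra_simps)
  ultimately have "m * \<bar>u \<bullet> v - (U *v u) \<bullet> (U *v v)\<bar> \<le> m * (ric U k * m)"
    using m by (simp add: abs_mult power2_eq_square mult_ac)
  then have "\<bar>u \<bullet> v - (U *v u) \<bullet> (U *v v)\<bar> \<le> ric U k * m"
    using m by (simp only: mult_le_cancel_left_pos)
  then show ?thesis by (simp add: m_def mult.assoc)
qed

lemma norm_vec_sq: "(norm x)\<^sup>2 = (\<Sum>i\<in>UNIV. (x $ i)\<^sup>2)"
  unfolding power2_norm_eq_inner inner_vec_def by (simp add: power2_eq_square)

definition vec_restrict :: "'d set \<Rightarrow> real ^ 'd \<Rightarrow> real ^ 'd" where
  "vec_restrict A x = (\<chi> i. if i \<in> A then x $ i else 0)"

lemma supp_vec_restrict: "supp (vec_restrict A x) = A \<inter> supp x"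
  by (auto simp: supp_def vec_restrict_def)

lemma inner_vec_restrict: "vec_restrict A x \<bullet> y = (\<Sum>i\<in>A. x $ i * y $ i)"
proof -
  have "vec_restrict A x \<bullet> y = (\<Sum>i\<in>UNIV. if i \<in> A then x $ i * y $ i else 0)"
    unfolding inner_vec_def vec_restrict_def by (rule sum.cong) auto
  then show ?thesis by (simp add: sum.If_cases)
qed

lemma norm_vec_restrict_sq: "(norm (vec_restrict A x))\<^sup>2 = (\<Sum>i\<in>A. (x $ i)\<^sup>2)"
  unfolding power2_norm_eq_inner inner_vec_restrict by (simp add: vec_restrict_def power2_eq_square)

lemma vec_restrict_supp: "vec_restrict (supp x) x = x"
  by (simp add: vec_restrict_def supp_def vec_eq_iff)

lemma norm_vec_restrict_disjoint:
  assumes "A \<inter> B = {}"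
  shows "(norm (vec_restrict A x))\<^sup>2 + (norm (vec_restrict B x))\<^sup>2 \<le> (norm x)\<^sup>2"
proof -
  have "(norm (vec_restrict A x))\<^sup>2 + (norm (vec_restrict B x))\<^sup>2 = (\<Sum>i\<in>A \<union> B. (x $ i)\<^sup>2)"
    using assms by (simp add: norm_vec_restrict_sq sum.union_disjoint)
  also have "\<dots> \<le> (norm x)\<^sup>2"
    unfolding norm_vec_sq by (rule sum_mono2) auto
  finally show ?thesis .
qed

lemma norm_vec_restrict_le: "norm (vec_restrict A x) \<le> norm x"
proof (rule power2_le_imp_le)
  show "(norm (vec_restrict A x))\<^sup>2 \<le> (norm x)\<^sup>2"
    unfolding norm_vec_restrict_sq by (subst norm_vec_sq) (rule sum_mono2; auto)
qed simp

lemma sum_abs_le_sqrt_card_mult_norm: "(\<Sum>i\<in>A. \<bar>x $ i\<bar>) \<le> sqrt (real (card A)) * norm x"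
proof (rule power2_le_imp_le)
  have "(\<Sum>i\<in>A. \<bar>x $ i\<bar>)\<^sup>2 = (\<Sum>i\<in>A. 1 * \<bar>x $ i\<bar>)\<^sup>2" by simp
  also have "\<dots> \<le> (\<Sum>i\<in>A. 1\<^sup>2) * (\<Sum>i\<in>A. \<bar>x $ i\<bar>\<^sup>2)"
    by (rule Cauchy_Schwarz_ineq_sum)
  also have "\<dots> = real (card A) * (norm (vec_restrict A x))\<^sup>2"
    by (simp add: norm_vec_restrict_sq)
  also have "\<dots> \<le> real (card A) * (norm x)\<^sup>2"
    using norm_vec_restrict_le by (intro mult_left_mono power_mono) auto
  finally show "(\<Sum>i\<in>A. \<bar>x $ i\<bar>)\<^sup>2 \<le> (sqrt (real (card A)) * norm x)\<^sup>2"
    by (simp add: power_mult_distrib)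
qed simp

lemma sum_abs_diff_le_sqrt_card_supp_mult_norm:
  "(\<Sum>i\<in>UNIV. \<bar>a $ i\<bar> - \<bar>b $ i\<bar>) \<le> sqrt (real (card (supp a))) * norm (b - a)"
proof -
  have "(\<Sum>i\<in>UNIV. \<bar>a $ i\<bar> - \<bar>b $ i\<bar>) \<le> (\<Sum>i\<in>UNIV. if i \<in> supp a then \<bar>(b - a) $ i\<bar> else 0)"
    by (rule sum_mono) (auto simp: supp_def)
  also have "\<dots> = (\<Sum>i\<in>supp a. \<bar>(b - a) $ i\<bar>)"
    by (simp add: sum.If_cases)
  also have "\<dots> \<le> sqrt (real (card (supp a))) * norm (b - a)"
    by (rule sum_abs_le_sqrt_card_mult_norm)
  finally show ?thesis .
qed

lemma soft_nth: "soft z l $ i = sgn (z $ i) * max (\<bar>z $ i\<bar> - l) 0"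
  by (simp add: soft_def)

lemma supp_soft: "l \<ge> 0 \<Longrightarrow> supp (soft z l) = {i. l < \<bar>z $ i\<bar>}"
  by (auto simp: supp_def soft_nth sgn_if)

(* The optimality condition of the proximal map of l |.| : a - p is a subgradient of l |.| at p. *)
lemma soft_threshold_real_ineq:
  fixes a q l :: real
  assumes l: "l \<ge> 0"
  defines "p \<equiv> sgn a * max (\<bar>a\<bar> - l) 0"
  shows "(a - p) * (q - p) \<le> l * (\<bar>q\<bar> - \<bar>p\<bar>)"
proof -
  consider "a > l" | "a < - l" | "\<bar>a\<bar> \<le> l" by linarith
  then show ?thesis
  proof cases
    case 1
    then have "p = a - l" using l by (simp add: p_def sgn_if)
    have "(a - p) * (q - p) = l * q - l * \<bar>p\<bar>"
      unfolding \<open>p = a - l\<close> using 1 by (simp add: algebra_simps)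
    then show ?thesis using mult_left_mono[OF abs_ge_self l] by (simp add: right_diff_distrib)
  next
    case 2
    then have "p = a + l" using l by (simp add: p_def sgn_if)
    have "(a - p) * (q - p) = - l * q - l * \<bar>p\<bar>"
      unfolding \<open>p = a + l\<close> using 2 by (simp add: algebra_simps)
    then show ?thesis using mult_left_mono[OF abs_ge_minus_self l] by (simp add: right_diff_distrib)
  next
    case 3
    then have "p = 0" by (simp add: p_def)
    have "a * q \<le> \<bar>a\<bar> * \<bar>q\<bar>" by (metis abs_ge_self abs_mult)
    also have "\<dots> \<le> l * \<bar>q\<bar>" using 3 by (intro mult_right_mono) auto
    finally show ?thesis using \<open>p = 0\<close> by simp
  qed
qed

lemma soft_threshold_ineq:
  assumes "l \<ge> 0"
  shows "(w - soft w l) \<bullet> (q - soft w l) \<le> l * (\<Sum>i\<in>UNIV. \<bar>q $ i\<bar> - \<bar>soft w l $ i\<bar>)"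
  unfolding inner_vec_def sum_distrib_left
proof (rule sum_mono)
  fix i
  show "(w - soft w l) $ i \<bullet> (q - soft w l) $ i \<le> l * (\<bar>q $ i\<bar> - \<bar>soft w l $ i\<bar>)"
    using soft_threshold_real_ineq[OF assms, of "w $ i" "q $ i"]
    by (simp only: soft_nth inner_real_def vector_minus_component)
qed

lemma ric_roc_inner_bound:
  fixes U :: "real ^ 'd ^ 'n"
  assumes v: "card (supp v) \<le> s" and A: "card A \<le> s" "supp v \<inter> A = {}"
    and B: "card B \<le> s" and e: "supp e \<subseteq> A \<union> B"
  shows "\<bar>v \<bullet> e - (U *v v) \<bullet> (U *v e)\<bar> \<le> (ric U s + sqrt 2 * roc U s) * norm v * norm e"
proof -
  define T where "T = supp v"
  define e1 where "e1 = vec_restrict T e"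
  define e2 where "e2 = vec_restrict A e"
  define e3 where "e3 = vec_restrict (- (T \<union> A)) e"
  have "e = e1 + e2 + e3"
    using A(2) by (auto simp: e1_def e2_def e3_def T_def vec_restrict_def vec_eq_iff)
  moreover have "v \<bullet> e = v \<bullet> e1"
    using inner_vec_restrict[of T v e] inner_vec_restrict[of T e v]
    by (simp add: T_def e1_def vec_restrict_supp inner_commute mult.commute)
  ultimately have split: "v \<bullet> e - (U *v v) \<bullet> (U *v e)
      = (v \<bullet> e1 - (U *v v) \<bullet> (U *v e1)) - (U *v v) \<bullet> (U *v e2) - (U *v v) \<bullet> (U *v e3)"
    by (simp add: matrix_vector_right_distrib inner_add_right)
  have b1: "\<bar>v \<bullet> e1 - (U *v v) \<bullet> (U *v e1)\<bar> \<le> ric U s * norm v * norm e1"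
    by (rule ric_inner_bound) (use v in \<open>simp add: e1_def supp_vec_restrict T_def Un_absorb2\<close>)
  have b2: "\<bar>(U *v v) \<bullet> (U *v e2)\<bar> \<le> roc U s * norm v * norm e2"
  proof (rule roc_bound[OF v])
    show "card (supp e2) \<le> s"
      using card_mono[OF finite, of "A \<inter> supp e" A] A(1) by (simp add: e2_def supp_vec_restrict)
    show "supp v \<inter> supp e2 = {}"
      using A(2) by (auto simp: e2_def supp_vec_restrict)
  qed
  have b3: "\<bar>(U *v v) \<bullet> (U *v e3)\<bar> \<le> roc U s * norm v * norm e3"
  proof (rule roc_bound[OF v])
    have "supp e3 \<subseteq> B"
      using e by (auto simp: e3_def supp_vec_restrict)
    then show "card (supp e3) \<le> s"
      using card_mono[OF finite, of "supp e3" B] B by simp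
    show "supp v \<inter> supp e3 = {}"
      by (auto simp: e3_def supp_vec_restrict T_def)
  qed
  have n1: "norm e1 \<le> norm e"
    unfolding e1_def by (rule norm_vec_restrict_le)
  have n23: "norm e2 + norm e3 \<le> sqrt 2 * norm e"
  proof (rule power2_le_imp_le)
    have "(norm e2 + norm e3)\<^sup>2 \<le> 2 * ((norm e2)\<^sup>2 + (norm e3)\<^sup>2)"
      using sum_squares_bound[of "norm e2" "norm e3"] by (simp add: power2_sum)
    also have "\<dots> \<le> 2 * (norm e)\<^sup>2"
      using norm_vec_restrict_disjoint[of A "- (T \<union> A)" e] by (simp add: e2_def e3_def Int_commute)
    finally show "(norm e2 + norm e3)\<^sup>2 \<le> (sqrt 2 * norm e)\<^sup>2"
      by (simp add: power_mult_distrib)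
  qed simp
  have "\<bar>v \<bullet> e - (U *v v) \<bullet> (U *v e)\<bar>
      \<le> norm v * (ric U s * norm e1 + roc U s * (norm e2 + norm e3))"
    unfolding split using b1 b2 b3 by (simp add: algebra_simps abs_le_iff)
  also have "\<dots> \<le> norm v * (ric U s * norm e + roc U s * (sqrt 2 * norm e))"
    using n1 n23 ric_nonneg[of U s] roc_nonneg[of U s]
    by (intro mult_left_mono add_mono) auto
  finally show ?thesis by (simp add: algebra_simps)
qed

lemma power2_le_mult_imp_le: "(a :: real)\<^sup>2 \<le> a * c \<Longrightarrow> 0 \<le> c \<Longrightarrow> a \<le> c"
  by (smt (verit) mult_le_cancel_left power2_eq_square)

lemma card_large_residual_coords_le:
  fixes U :: "real ^ 'd ^ 'n" and e :: "real ^ 'd"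
  defines "z \<equiv> e - transpose U *v (U *v e)"
  assumes A: "card A \<le> s" and B: "card B \<le> s" and e: "supp e \<subseteq> A \<union> B"
    and lam: "0 \<le> lam" "(ric U s + sqrt 2 * roc U s) * norm e \<le> sqrt (real s) * lam"
  shows "card {i. i \<notin> A \<and> lam < \<bar>z $ i\<bar>} \<le> s"
proof (cases "s = 0")
  case True
  then have "e = 0"
    using A B e by (simp flip: supp_eq_empty_iff)
  then show ?thesis using lam(1) by (simp add: z_def)
next
  case False
  show ?thesis
  proof (rule ccontr)
    assume "\<not> ?thesis"
    then obtain T where T: "T \<subseteq> {i. i \<notin> A \<and> lam < \<bar>z $ i\<bar>}" "card T = s"
      by (meson obtain_subset_with_card_n nat_le_linear)
    define v where "v = vec_restrict T z"
    have supp_v: "supp v \<subseteq> T"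
      by (simp add: v_def supp_vec_restrict)
    have "real s * lam\<^sup>2 = (\<Sum>i\<in>T. lam\<^sup>2)"
      using T(2) by simp
    also have "\<dots> < (\<Sum>i\<in>T. (z $ i)\<^sup>2)"
    proof (rule sum_strict_mono)
      show "T \<noteq> {}" using T(2) False by auto
      show "lam\<^sup>2 < (z $ i)\<^sup>2" if "i \<in> T" for i
      proof -
        have "lam < \<bar>z $ i\<bar>" using T(1) that by blast
        then have "lam\<^sup>2 < \<bar>z $ i\<bar>\<^sup>2" using lam(1) by (intro power_strict_mono) auto
        then show ?thesis by simp
      qed
    qed simp
    also have "\<dots> = (norm v)\<^sup>2"
      by (simp add: v_def norm_vec_restrict_sq)
    finally have large: "real s * lam\<^sup>2 < (norm v)\<^sup>2" .
    have "(norm v)\<^sup>2 = v \<bullet> z"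
      unfolding v_def norm_vec_restrict_sq inner_vec_restrict by (simp add: power2_eq_square)
    also have "\<dots> = v \<bullet> e - (U *v v) \<bullet> (U *v e)"
      unfolding z_def inner_diff_right inner_transpose_matrix ..
    also have "\<dots> \<le> (ric U s + sqrt 2 * roc U s) * norm v * norm e"
    proof (rule order_trans[OF abs_ge_self ric_roc_inner_bound[OF _ A _ B e]])
      show "card (supp v) \<le> s"
        using card_mono[OF finite supp_v] T(2) by simp
      show "supp v \<inter> A = {}"
        using supp_v T(1) by blast
    qed
    also have "\<dots> \<le> norm v * (sqrt (real s) * lam)"
      using mult_left_mono[OF lam(2) norm_ge_zero[of v]] by (simp add: mult_ac)
    finally have "norm v \<le> sqrt (real s) * lam"
      by (rule power2_le_mult_imp_le) (simp add: lam(1))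
    then have "(norm v)\<^sup>2 \<le> (sqrt (real s) * lam)\<^sup>2"
      by (rule power_mono) simp
    then have "(norm v)\<^sup>2 \<le> real s * lam\<^sup>2"
      by (simp add: power_mult_distrib)
    with large show False by simp
  qed
qed

lemma soft_threshold_step_error:
  fixes U :: "real ^ 'd ^ 'n" and xs xt :: "real ^ 'd" and lam :: real
  defines "e \<equiv> xt - xs"
  defines "xn \<equiv> soft (xs + (e - transpose U *v (U *v e))) lam"
  assumes xs: "card (supp xs) \<le> s" and xt: "card (supp xt - supp xs) \<le> s"
    and xn: "card (supp xn - supp xs) \<le> s" and lam: "0 \<le> lam"
  shows "norm (xn - xs) \<le> ric U (3 * s) * norm e + sqrt (real s) * lam"
proof -
  define z where "z = e - transpose U *v (U *v e)"
  define h where "h = xn - xs"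
  have "(norm h)\<^sup>2 - z \<bullet> h = (xs + z - xn) \<bullet> (xs - xn)"
    by (simp add: h_def power2_norm_eq_inner algebra_simps inner_diff_left inner_diff_right inner_commute)
  also have "\<dots> \<le> lam * (\<Sum>i\<in>UNIV. \<bar>xs $ i\<bar> - \<bar>xn $ i\<bar>)"
    unfolding xn_def z_def by (rule soft_threshold_ineq[OF lam])
  also have "\<dots> \<le> lam * (sqrt (real s) * norm h)"
  proof (rule mult_left_mono[OF _ lam])
    have "(\<Sum>i\<in>UNIV. \<bar>xs $ i\<bar> - \<bar>xn $ i\<bar>) \<le> sqrt (real (card (supp xs))) * norm h"
      unfolding h_def by (rule sum_abs_diff_le_sqrt_card_supp_mult_norm)
    also have "\<dots> \<le> sqrt (real s) * norm h"
      using xs by (intro mult_right_mono) auto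
    finally show "(\<Sum>i\<in>UNIV. \<bar>xs $ i\<bar> - \<bar>xn $ i\<bar>) \<le> sqrt (real s) * norm h" .
  qed
  finally have prox: "(norm h)\<^sup>2 \<le> z \<bullet> h + lam * (sqrt (real s) * norm h)"
    by simp
  have "z \<bullet> h = e \<bullet> h - (U *v e) \<bullet> (U *v h)"
    unfolding z_def inner_diff_left inner_commute[of "transpose U *v _"] inner_transpose_matrix
    by (simp add: inner_commute)
  also have "\<dots> \<le> ric U (3 * s) * norm e * norm h"
  proof (rule order_trans[OF abs_ge_self ric_inner_bound])
    have "supp e \<union> supp h \<subseteq> supp xs \<union> (supp xt - supp xs) \<union> (supp xn - supp xs)"
      using supp_diff_subset[of xt xs] supp_diff_subset[of xn xs] by (auto simp: e_def h_def)
    then have "card (supp e \<union> supp h) \<le> card (supp xs) + card (supp xt - supp xs) + card (supp xn - supp xs)"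
      by (meson card_Un_le card_mono finite le_trans add_le_mono order_refl)
    then show "card (supp e \<union> supp h) \<le> 3 * s"
      using xs xt xn by linarith
  qed
  finally have "(norm h)\<^sup>2 \<le> norm h * (ric U (3 * s) * norm e + sqrt (real s) * lam)"
    using prox by (simp add: algebra_simps)
  then show ?thesis
    unfolding h_def by (rule power2_le_mult_imp_le) (simp add: lam ric_nonneg)
qed

lemma soft_threshold_step:
  fixes U :: "real ^ 'd ^ 'n" and xs xt :: "real ^ 'd"
  assumes xs: "card (supp xs) \<le> s" and xt: "card (supp xt - supp xs) \<le> s"
    and D: "norm (xt - xs) \<le> D"
    and lam: "lam = (ric U s + sqrt 2 * roc U s) / sqrt (real s) * D"
  defines "xn \<equiv> soft (xt - transpose U *v (U *v xt - U *v xs)) lam"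
  shows "card (supp xn - supp xs) \<le> s \<and>
    norm (xn - xs) \<le> (ric U s + sqrt 2 * roc U s + ric U (3 * s)) * D"
proof -
  define e where "e = xt - xs"
  define \<rho> where "\<rho> = ric U s + sqrt 2 * roc U s"
  have xn: "xn = soft (xs + (e - transpose U *v (U *v e))) lam"
    by (simp add: xn_def e_def matrix_vector_mult_diff_distrib algebra_simps)
  have \<rho>: "0 \<le> \<rho>"
    by (simp add: \<rho>_def ric_nonneg roc_nonneg)
  have "0 \<le> D"
    using D norm_ge_zero order_trans by blast
  then have lam_nonneg: "0 \<le> lam"
    using \<rho> by (simp add: lam \<rho>_def)
  have supp_e: "supp e \<subseteq> supp xs \<union> (supp xt - supp xs)"
    using supp_diff_subset[of xt xs] by (auto simp: e_def)
  \<comment> \<open>For \<open>s = 0\<close> the division by \<open>sqrt 0\<close> gives \<open>lam = 0\<close>; then \<open>xt = xs = 0\<close>.\<close>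
  have lam_le: "sqrt (real s) * lam \<le> \<rho> * D"
    using \<rho> \<open>0 \<le> D\<close> by (cases "s = 0") (simp_all add: lam \<rho>_def)
  have card: "card (supp xn - supp xs) \<le> s"
  proof -
    have "\<rho> * norm e \<le> sqrt (real s) * lam"
    proof (cases "s = 0")
      case True
      then have "e = 0"
        using xs xt supp_e by (simp flip: supp_eq_empty_iff)
      then show ?thesis using lam_nonneg by simp
    next
      case False
      then show ?thesis
        using mult_left_mono[OF D[folded e_def] \<rho>] by (simp add: lam \<rho>_def)
    qed
    moreover have "supp xn - supp xs
        = {i. i \<notin> supp xs \<and> lam < \<bar>(e - transpose U *v (U *v e)) $ i\<bar>}"
      unfolding xn supp_soft[OF lam_nonneg] by (auto simp: supp_def)
    ultimately show ?thesis
      using card_large_residual_coords_le[OF xs xt supp_e lam_nonneg] by (simp add: \<rho>_def)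
  qed
  have "norm (xn - xs) \<le> ric U (3 * s) * norm e + sqrt (real s) * lam"
    unfolding xn e_def by (rule soft_threshold_step_error[OF xs xt card[unfolded xn e_def] lam_nonneg])
  also have "\<dots> \<le> ric U (3 * s) * D + \<rho> * D"
    using D lam_le ric_nonneg[of U "3 * s"] by (intro add_mono mult_left_mono) (auto simp: e_def)
  finally show ?thesis
    using card by (simp add: \<rho>_def algebra_simps)
qed

theorem theorem1:
  fixes U :: "real ^ 'd ^ 'n" and xs :: "real ^ 'd" and y :: "real ^ 'n" and s :: nat
    and x :: "nat \<Rightarrow> real ^ 'd" and D :: "nat \<Rightarrow> real" and lam :: "nat \<Rightarrow> real"
  assumes "2 * s \<le> CARD('d)"
    and "card (supp xs) \<le> s"
    and "y = U *v xs"
    and "ric U s + sqrt 2 * roc U s + ric U (3 * s) < 1"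
    and "x 1 = 0"
    and "\<And>t. t \<ge> 1 \<Longrightarrow>
           x (Suc t) = soft (x t - transpose U *v (U *v x t - y)) (lam t)"
    and "norm (x 1 - xs) \<le> D 1"
    and "\<And>t. t \<ge> 1 \<Longrightarrow> D (Suc t) = (ric U s + sqrt 2 * roc U s + ric U (3 * s)) * D t"
    and "\<And>t. t \<ge> 1 \<Longrightarrow> lam t = (ric U s + sqrt 2 * roc U s) / sqrt (real s) * D t"
  shows "\<forall>t. card (supp (x (t + 1)) - supp xs) \<le> s \<and>
             norm (x (t + 1) - xs) \<le> (ric U s + sqrt 2 * roc U s + ric U (3 * s)) ^ t * D 1"
proof -
  let ?\<gamma> = "ric U s + sqrt 2 * roc U s + ric U (3 * s)"
  have D_closed: "D (t + 1) = ?\<gamma> ^ t * D 1" for t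
  proof (induction t)
    case (Suc t)
    have "D (Suc t + 1) = ?\<gamma> * D (t + 1)"
      using assms(8)[of "t + 1"] by simp
    with Suc.IH show ?case by simp
  qed simp
  have invariant: "card (supp (x t) - supp xs) \<le> s \<and> norm (x t - xs) \<le> D t" if "t \<ge> 1" for t
    using that
  proof (induction t rule: nat_induct_at_least)
    case base
    then show ?case using assms(5,7) by (simp add: supp_def)
  next
    case (Suc t)
    have "x (Suc t) = soft (x t - transpose U *v (U *v x t - U *v xs)) (lam t)"
      using assms(3,6) Suc.hyps by simp
    then show ?case
      using soft_threshold_step[OF assms(2) conjunct1[OF Suc.IH] conjunct2[OF Suc.IH] assms(9)[OF Suc.hyps]]
      by (simp add: assms(8)[OF Suc.hyps])
  qed
  show ?thesis
  proof
    fix t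
    show "card (supp (x (t + 1)) - supp xs) \<le> s \<and> norm (x (t + 1) - xs) \<le> ?\<gamma> ^ t * D 1"
      using invariant[of "t + 1"] D_closed[of t] by simp
  qed
qed

end
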